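(* Let $x$ be a real number with $x \notin \mathbb{Q}$, and let $y_1, \dots, y_k$ be real numbers such that $1, y_1, \dots, y_k$ are linearly independent over $\mathbb{Q}$. Then there exist $k-1$ numbers among $x y_1, \dots, x y_k$ such that $1$, $x$ and these $k-1$ numbers are linearly independent over $\mathbb{Q}$. *)

theory Defs
  imports "HOL-Analysis.Analysis"
begin

definition Q_lin_indep :: "real list \<Rightarrow> bool" where
  "Q_lin_indep xs \<longleftrightarrow>
     (\<forall>c :: nat \<Rightarrow> rat. (\<Sum>i<length xs. of_rat (c i) * xs ! i) = 0 \<longrightarrow> (\<forall>i<length xs. c i = 0))"

end

(*
  Suppose a + b x + \<Sum>j\<in>S. d j x y j = 0 with rational a, b, d j, i.e.
  a + x (b + \<Sum>j\<in>S. d j y j) = 0. If a = 0, then x \<noteq> 0 and the independence of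
  1 and the y j force b = 0 and all d j = 0. If a \<noteq> 0, then 1/x lies in the
  rational span of 1 and the y j, j \<in> S. So it suffices to find S of size k - 1
  whose span avoids 1/x. If 1/x is not in the span of 1, y 1, ..., y k, any S will
  do. Otherwise its coordinates there are unique, and as 1/x is irrational some
  y m has a nonzero coordinate; then S = {1..k} - {m} works.
*)
theory Submission
  imports Defs
begin

definition Q_span_with_one :: "('a \<Rightarrow> real) \<Rightarrow> 'a set \<Rightarrow> real set" where
  "Q_span_with_one y A = {of_rat b + (\<Sum>j\<in>A. of_rat (c j) * y j) | b c. True}"

definition Q_indep_with_one :: "('a \<Rightarrow> real) \<Rightarrow> 'a set \<Rightarrow> bool" where
  "Q_indep_with_one y A \<longleftrightarrow>
     (\<forall>b c. of_rat b + (\<Sum>j\<in>A. of_rat (c j) * y j) = 0 \<longrightarrow> b = 0 \<and> (\<forall>j\<in>A. c j = 0))"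

lemma Q_span_with_oneI:
  "of_rat b + (\<Sum>j\<in>A. of_rat (c j) * y j) \<in> Q_span_with_one y A"
  unfolding Q_span_with_one_def by blast

lemma Q_indep_with_oneD:
  assumes "Q_indep_with_one y A" and "of_rat b + (\<Sum>j\<in>A. of_rat (c j) * y j) = 0"
  shows "b = 0" and "\<forall>j\<in>A. c j = 0"
  using assms unfolding Q_indep_with_one_def by blast+

lemma sum_lessThan_add:
  fixes f :: "nat \<Rightarrow> 'a::comm_monoid_add"
  shows "(\<Sum>i<n + m. f i) = (\<Sum>i<n. f i) + (\<Sum>i<m. f (n + i))"
  by (induction m) (simp_all add: ac_simps)

lemma Q_lin_indep_append_map:
  assumes "distinct L"
  shows "Q_lin_indep (xs @ map v L) \<longleftrightarrow>
    (\<forall>c d. (\<Sum>i<length xs. of_rat (c i) * xs ! i) + (\<Sum>j\<in>set L. of_rat (d j) * v j) = 0 \<longrightarrow>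
       (\<forall>i<length xs. c i = 0) \<and> (\<forall>j\<in>set L. d j = 0))"
proof -
  let ?n = "length xs" and ?m = "length L"
  have split: "(\<Sum>i<length (xs @ map v L). of_rat (e i) * (xs @ map v L) ! i)
      = (\<Sum>i<?n. of_rat (e i) * xs ! i) + (\<Sum>i<?m. of_rat (e (?n + i)) * v (L ! i))" for e
    by (simp add: sum_lessThan_add nth_append)
  have set_L: "(\<Sum>j\<in>set L. g j) = (\<Sum>i<?m. g (L ! i))" for g :: "_ \<Rightarrow> real"
    using assms by (simp add: sum.distinct_set_conv_list sum_list_sum_nth atLeast0LessThan)
  show ?thesis
  proof
    assume indep: "Q_lin_indep (xs @ map v L)"
    show "\<forall>c d. (\<Sum>i<?n. of_rat (c i) * xs ! i) + (\<Sum>j\<in>set L. of_rat (d j) * v j) = 0 \<longrightarrow>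
       (\<forall>i<?n. c i = 0) \<and> (\<forall>j\<in>set L. d j = 0)"
    proof (intro allI impI)
      fix c d
      assume "(\<Sum>i<?n. of_rat (c i) * xs ! i) + (\<Sum>j\<in>set L. of_rat (d j) * v j) = 0"
      define e where "e i = (if i < ?n then c i else d (L ! (i - ?n)))" for i
      have "(\<Sum>i<length (xs @ map v L). of_rat (e i) * (xs @ map v L) ! i) = 0"
        using \<open>_ = 0\<close> unfolding split set_L e_def by simp
      with indep have e_zero: "e i = 0" if "i < ?n + ?m" for i
        using that unfolding Q_lin_indep_def by simp
      have "c i = e i" if "i < ?n" for i
        using that by (simp add: e_def)
      moreover have "d (L ! i) = e (?n + i)" for i
        by (simp add: e_def)
      ultimately show "(\<forall>i<?n. c i = 0) \<and> (\<forall>j\<in>set L. d j = 0)"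
        using e_zero by (auto simp: in_set_conv_nth)
    qed
  next
    assume indep: "\<forall>c d. (\<Sum>i<?n. of_rat (c i) * xs ! i) + (\<Sum>j\<in>set L. of_rat (d j) * v j) = 0 \<longrightarrow>
       (\<forall>i<?n. c i = 0) \<and> (\<forall>j\<in>set L. d j = 0)"
    show "Q_lin_indep (xs @ map v L)"
      unfolding Q_lin_indep_def
    proof (intro allI impI)
      fix e i
      assume "(\<Sum>i<length (xs @ map v L). of_rat (e i) * (xs @ map v L) ! i) = 0"
        and "i < length (xs @ map v L)"
      define d where "d j = e (?n + the_inv_into {..<?m} ((!) L) j)" for j
      have d_nth: "d (L ! i) = e (?n + i)" if "i < ?m" for i
        using assms that by (simp add: d_def the_inv_into_f_f inj_on_nth)
      have "(\<Sum>i<?n. of_rat (e i) * xs ! i) + (\<Sum>j\<in>set L. of_rat (d j) * v j) = 0"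
        using \<open>_ = 0\<close> unfolding split set_L by (simp add: d_nth)
      with indep have "\<forall>i<?n. e i = 0" "\<forall>j\<in>set L. d j = 0" by blast+
      then show "e i = 0"
        using \<open>i < _\<close> d_nth[of "i - ?n"] by (cases "i < ?n") auto
    qed
  qed
qed

lemma Q_lin_indep_one_Cons_map:
  assumes "distinct L"
  shows "Q_lin_indep (1 # map y L) \<longleftrightarrow> Q_indep_with_one y (set L)"
proof -
  have "Q_lin_indep (1 # map y L) \<longleftrightarrow>
      (\<forall>(c :: nat \<Rightarrow> rat) d.
         of_rat (c 0) + (\<Sum>j\<in>set L. of_rat (d j) * y j) = 0 \<longrightarrow> c 0 = 0 \<and> (\<forall>j\<in>set L. d j = 0))"
    using Q_lin_indep_append_map[OF assms, of "[1]" y] by (simp add: lessThan_Suc)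
  also have "\<dots> \<longleftrightarrow> Q_indep_with_one y (set L)"
    unfolding Q_indep_with_one_def
  proof (intro iffI allI impI)
    fix b d
    assume indep: "\<forall>(c :: nat \<Rightarrow> rat) d.
      of_rat (c 0) + (\<Sum>j\<in>set L. of_rat (d j) * y j) = 0 \<longrightarrow> c 0 = 0 \<and> (\<forall>j\<in>set L. d j = 0)"
      and "of_rat b + (\<Sum>j\<in>set L. of_rat (d j) * y j) = 0"
    then show "b = 0 \<and> (\<forall>j\<in>set L. d j = 0)"
      using indep[rule_format, of "\<lambda>_. b" d] by simp
  qed blast
  finally show ?thesis .
qed

lemma sum_of_rat_restrict:
  fixes y :: "'a \<Rightarrow> real"
  assumes "finite A" and "B \<subseteq> A"
  shows "(\<Sum>j\<in>A. of_rat (if j \<in> B then c j else 0) * y j) = (\<Sum>j\<in>B. of_rat (c j) * y j)"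
proof -
  have "(\<Sum>j\<in>A. of_rat (if j \<in> B then c j else 0) * y j)
      = (\<Sum>j\<in>B. of_rat (if j \<in> B then c j else 0) * y j)"
    using assms by (intro sum.mono_neutral_right) auto
  then show ?thesis
    by simp
qed

lemma Q_span_with_one_mono:
  assumes "finite A" and "B \<subseteq> A"
  shows "Q_span_with_one y B \<subseteq> Q_span_with_one y A"
proof
  fix z
  assume "z \<in> Q_span_with_one y B"
  then obtain b c where "z = of_rat b + (\<Sum>j\<in>B. of_rat (c j) * y j)"
    unfolding Q_span_with_one_def by blast
  also have "\<dots> = of_rat b + (\<Sum>j\<in>A. of_rat (if j \<in> B then c j else 0) * y j)"
    by (simp add: sum_of_rat_restrict[OF assms])
  finally show "z \<in> Q_span_with_one y A"
    by (simp add: Q_span_with_oneI)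
qed

lemma Q_indep_with_one_subset:
  assumes "finite A" and "B \<subseteq> A" and "Q_indep_with_one y A"
  shows "Q_indep_with_one y B"
  unfolding Q_indep_with_one_def
proof (intro allI impI)
  fix b c
  assume "of_rat b + (\<Sum>j\<in>B. of_rat (c j) * y j) = 0"
  then have "of_rat b + (\<Sum>j\<in>A. of_rat (if j \<in> B then c j else 0) * y j) = 0"
    by (simp add: sum_of_rat_restrict[OF assms(1,2)])
  from Q_indep_with_oneD[OF assms(3) this] assms(2) show "b = 0 \<and> (\<forall>j\<in>B. c j = 0)"
    by (metis subsetD)
qed

lemma Q_indep_with_one_coeffs_unique:
  assumes "Q_indep_with_one y A"
    and "of_rat b + (\<Sum>j\<in>A. of_rat (c j) * y j) = of_rat b' + (\<Sum>j\<in>A. of_rat (c' j) * y j)"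
  shows "\<forall>j\<in>A. c j = c' j"
proof -
  have "of_rat (b - b') + (\<Sum>j\<in>A. of_rat (c j - c' j) * y j) = 0"
    using assms(2) by (simp add: of_rat_diff algebra_simps sum_subtractf)
  from Q_indep_with_oneD(2)[OF assms(1) this] show ?thesis
    by simp
qed

lemma exists_delete_notin_Q_span_with_one:
  assumes "finite A" and "Q_indep_with_one y A" and "z \<notin> \<rat>"
  obtains m where "card (A - {m}) = card A - 1" and "z \<notin> Q_span_with_one y (A - {m})"
proof (cases "z \<in> Q_span_with_one y A")
  case True
  then obtain b c where z: "z = of_rat b + (\<Sum>j\<in>A. of_rat (c j) * y j)"
    unfolding Q_span_with_one_def by blast
  have "\<exists>m\<in>A. c m \<noteq> 0"
  proof (rule ccontr)
    assume "\<not> (\<exists>m\<in>A. c m \<noteq> 0)"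
    then have "z = of_rat b"
      using z by simp
    with assms(3) show False
      by (simp add: Rats_def)
  qed
  then obtain m where "m \<in> A" and "c m \<noteq> 0" ..
  have "z \<notin> Q_span_with_one y (A - {m})"
  proof
    assume "z \<in> Q_span_with_one y (A - {m})"
    then obtain b' c' where z': "z = of_rat b' + (\<Sum>j\<in>A - {m}. of_rat (c' j) * y j)"
      unfolding Q_span_with_one_def by blast
    have "of_rat b + (\<Sum>j\<in>A. of_rat (c j) * y j) = z"
      using z ..
    also have "\<dots> = of_rat b' + (\<Sum>j\<in>A. of_rat (if j \<in> A - {m} then c' j else 0) * y j)"
      using z' sum_of_rat_restrict[OF assms(1), of "A - {m}"] by simp
    finally have "\<forall>j\<in>A. c j = (if j \<in> A - {m} then c' j else 0)"
      by (rule Q_indep_with_one_coeffs_unique[OF assms(2)])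
    with \<open>m \<in> A\<close> \<open>c m \<noteq> 0\<close> show False
      by simp
  qed
  with \<open>m \<in> A\<close> show thesis
    by (intro that) auto
next
  case False
  obtain m where "m \<in> A \<or> A = {}"
    by blast
  \<comment> \<open>for \<open>A = {}\<close> the cardinality claim holds because \<open>0 - 1 = 0\<close> on \<open>nat\<close>\<close>
  then have "card (A - {m}) = card A - 1"
    by (auto simp: card_Diff_singleton_if)
  moreover have "z \<notin> Q_span_with_one y (A - {m})"
    using False Q_span_with_one_mono[OF assms(1), of "A - {m}"] by blast
  ultimately show thesis
    by (rule that)
qed

lemma Q_indep_one_x_times:
  fixes x :: real
  assumes "Q_indep_with_one y S" and "x \<noteq> 0" and "1 / x \<notin> Q_span_with_one y S"
    and "of_rat a + of_rat b * x + (\<Sum>j\<in>S. of_rat (d j) * (x * y j)) = 0"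
  shows "a = 0 \<and> b = 0 \<and> (\<forall>j\<in>S. d j = 0)"
proof -
  define t where "t = of_rat b + (\<Sum>j\<in>S. of_rat (d j) * y j)"
  have rel: "of_rat a + x * t = 0"
    using assms(4) by (simp add: t_def algebra_simps sum_distrib_left)
  have "a = 0"
  proof (rule ccontr)
    assume "a \<noteq> 0"
    have "1 / x = - t / of_rat a"
      using rel \<open>a \<noteq> 0\<close> assms(2) by (simp add: field_simps)
    also have "\<dots> = of_rat (- b / a) + (\<Sum>j\<in>S. of_rat (- d j / a) * y j)"
    proof -
      have "(\<Sum>j\<in>S. of_rat (- d j / a) * y j) = - (\<Sum>j\<in>S. of_rat (d j) * y j) / of_rat a"
        by (simp add: of_rat_divide of_rat_minus sum_divide_distrib sum_negf)
      then show ?thesis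
        by (simp add: t_def of_rat_divide of_rat_minus diff_divide_distrib)
    qed
    finally have "1 / x \<in> Q_span_with_one y S"
      by (simp add: Q_span_with_oneI)
    with assms(3) show False ..
  qed
  with rel assms(2) have "t = 0"
    by simp
  with Q_indep_with_oneD[OF assms(1)] \<open>a = 0\<close> show ?thesis
    unfolding t_def by blast
qed

lemma Q_lin_indep_one_x_times_map:
  fixes x :: real
  assumes "distinct L" and "Q_indep_with_one y (set L)" and "x \<noteq> 0"
    and "1 / x \<notin> Q_span_with_one y (set L)"
  shows "Q_lin_indep (1 # x # map (\<lambda>i. x * y i) L)"
proof -
  have "Q_lin_indep ([1, x] @ map (\<lambda>i. x * y i) L)"
    unfolding Q_lin_indep_append_map[OF assms(1)]
  proof (intro allI impI)
    fix c d
    assume "(\<Sum>i<length [1, x]. of_rat (c i) * [1, x] ! i)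
      + (\<Sum>j\<in>set L. of_rat (d j) * (x * y j)) = 0"
    then have "of_rat (c 0) + of_rat (c 1) * x + (\<Sum>j\<in>set L. of_rat (d j) * (x * y j)) = 0"
      by (simp add: lessThan_Suc numeral_2_eq_2 ac_simps)
    from Q_indep_one_x_times[OF assms(2-4) this]
    show "(\<forall>i<length [1, x]. c i = 0) \<and> (\<forall>j\<in>set L. d j = 0)"
      by (simp add: less_Suc_eq)
  qed
  then show ?thesis
    by simp
qed

theorem lemma1:
  fixes x :: real and y :: "nat \<Rightarrow> real" and k :: nat
  assumes "x \<notin> \<rat>"
    and "Q_lin_indep (1 # map y [1..<k+1])"
  shows "\<exists>S \<subseteq> {1..k}. card S = k - 1 \<and>
           Q_lin_indep (1 # x # map (\<lambda>i. x * y i) (sorted_list_of_set S))"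
proof -
  have "set [1..<k+1] = {1..k}"
    by auto
  with assms(2) have indep: "Q_indep_with_one y {1..k}"
    using Q_lin_indep_one_Cons_map[OF distinct_upt] by metis
  have "x \<noteq> 0" and "1 / x \<notin> \<rat>"
    using assms(1) Rats_inverse[of "1 / x"] by auto
  obtain m where card: "card ({1..k} - {m}) = k - 1"
    and notin: "1 / x \<notin> Q_span_with_one y ({1..k} - {m})"
    using exists_delete_notin_Q_span_with_one[OF finite_atLeastAtMost indep \<open>1 / x \<notin> \<rat>\<close>]
    by auto
  have "Q_indep_with_one y ({1..k} - {m})"
    using Q_indep_with_one_subset[OF _ _ indep] by blast
  with notin \<open>x \<noteq> 0\<close>
  have "Q_lin_indep (1 # x # map (\<lambda>i. x * y i) (sorted_list_of_set ({1..k} - {m})))"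
    by (intro Q_lin_indep_one_x_times_map) simp_all
  with card show ?thesis
    by blast
qed

end
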